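(* Let $A\subseteq\mathbb{R}$ be an open invex set with respect to $\eta:A\times A\to\mathbb{R}$ and let $a,b\in A$ with $a<a+\eta(b,a)$. Let $f:A\to\mathbb{R}$ be differentiable with $f'\in L[a,a+\eta(b,a)]$, and suppose $|f'|$ is preinvex on $A$. Then for every $\alpha>0$, \[ \left|\frac{f(a)+f(a+\eta(b,a))}{2}-\frac{\Gamma(\alpha+1)}{2\eta^{\alpha}(b,a)}\Big[J_{a^+}^{\alpha}f\big(a+\eta(b,a)\big)+J_{(a+\eta(b,a))^-}^{\alpha}f(a)\Big]\right|\le\frac{\eta(b,a)}{2(\alpha+1)}\left(1-\frac{1}{2^{\alpha}}\right)\big[|f'(a)|+|f'(b)|\big]. \]
   Context: A set $A\subseteq\mathbb{R}$ is invex with respect to $\eta:A\times A\to\mathbb{R}$ if $x+t\eta(y,x)\in A$ for all $x,y\in A$ and $t\in[0,1]$. A function $g$ on an invex set $A$ is preinvex with respect to $\eta$ if $g(x+t\eta(y,x))\le(1-t)g(x)+tg(y)$ for all $x,y\in A$, $t\in[0,1]$. For $g\in L[c,d]$ and $\alpha>0$, the Riemann–Liouville fractional integrals are $J_{c^+}^{\alpha}g(x)=\frac{1}{\Gamma(\alpha)}\int_c^x(x-t)^{\alpha-1}g(t)\,dt$ for $x>c$ and $J_{d^-}^{\alpha}g(x)=\frac{1}{\Gamma(\alpha)}\int_x^d(t-x)^{\alpha-1}g(t)\,dt$ for $x<d$; $\eta^{\alpha}(b,a)=(\eta(b,a))^{\alpha}$. *)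

theory Defs
  imports "HOL-Analysis.Analysis"
begin

definition invex_set :: "real set \<Rightarrow> (real \<Rightarrow> real \<Rightarrow> real) \<Rightarrow> bool" where
  "invex_set A \<eta> \<longleftrightarrow> (\<forall>x\<in>A. \<forall>y\<in>A. \<forall>t\<in>{0..1}. x + t * \<eta> y x \<in> A)"

definition preinvex_on :: "real set \<Rightarrow> (real \<Rightarrow> real \<Rightarrow> real) \<Rightarrow> (real \<Rightarrow> real) \<Rightarrow> bool" where
  "preinvex_on A \<eta> g \<longleftrightarrow>
     (\<forall>x\<in>A. \<forall>y\<in>A. \<forall>t\<in>{0..1}. g (x + t * \<eta> y x) \<le> (1 - t) * g x + t * g y)"

definition RL_left :: "real \<Rightarrow> real \<Rightarrow> (real \<Rightarrow> real) \<Rightarrow> real \<Rightarrow> real" where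
  "RL_left \<alpha> c g x = (1 / Gamma \<alpha>) * (LINT t:{c..x}|lborel. (x - t) powr (\<alpha> - 1) * g t)"

definition RL_right :: "real \<Rightarrow> real \<Rightarrow> (real \<Rightarrow> real) \<Rightarrow> real \<Rightarrow> real" where
  "RL_right \<alpha> d g x = (1 / Gamma \<alpha>) * (LINT t:{x..d}|lborel. (t - x) powr (\<alpha> - 1) * g t)"

end

theory Submission
  imports Defs
begin

text \<open>Put \<open>c = a + \<eta>(b,a)\<close>. Integrating by parts, the left-hand side equals
  \<open>1 / (2 (c-a)^\<alpha>) \<integral>\<^sub>a\<^sup>c ((x-a)^\<alpha> - (c-x)^\<alpha>) f'(x) dx\<close>. Preinvexity of \<open>|f'|\<close>,
  applied along the segment \<open>x = a + t \<eta>(b,a)\<close>, bounds \<open>|f'(x)|\<close> by the linear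
  interpolation \<open>((c-x) |f'(a)| + (x-a) |f'(b)|) / (c-a)\<close>, and the integral of
  \<open>|(x-a)^\<alpha> - (c-x)^\<alpha>|\<close> against this linear function is computed in closed form by
  splitting at the midpoint, where the kernel changes sign.\<close>

lemma has_integral_real_derivative_interior:
  fixes F F' :: "real \<Rightarrow> real"
  assumes "a \<le> c" "continuous_on {a..c} F"
    and "\<And>x. x \<in> {a<..<c} \<Longrightarrow> (F has_real_derivative F' x) (at x)"
  shows "(F' has_integral (F c - F a)) {a..c}"
  using fundamental_theorem_of_calculus_interior[of a c F F'] assms
  by (simp add: has_real_derivative_iff_has_vector_derivative)

lemma continuous_on_powr_Icc:
  fixes a c p :: real
  assumes "p > 0"
  shows "continuous_on {a..c} (\<lambda>x. (c - x) powr p)"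
    and "continuous_on {a..c} (\<lambda>x. (x - a) powr p)"
  using assms by (intro continuous_on_powr'; auto intro!: continuous_intros)+

lemma powr_kernel_integrable_on:
  fixes a c \<alpha> :: real
  assumes "a \<le> c" "\<alpha> > 0"
  shows "(\<lambda>x. (c - x) powr (\<alpha> - 1)) integrable_on {a..c}"
    and "(\<lambda>x. (x - a) powr (\<alpha> - 1)) integrable_on {a..c}"
proof -
  have "((\<lambda>x. (c - x) powr (\<alpha> - 1)) has_integral
          (- ((c - c) powr \<alpha>) / \<alpha> - - ((c - a) powr \<alpha>) / \<alpha>)) {a..c}"
    by (rule has_integral_real_derivative_interior[where F = "\<lambda>x. - ((c - x) powr \<alpha>) / \<alpha>"])
      (use assms in \<open>auto intro!: derivative_eq_intros continuous_on_divide continuous_on_minus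
        continuous_on_powr_Icc\<close>)
  then show "(\<lambda>x. (c - x) powr (\<alpha> - 1)) integrable_on {a..c}"
    by blast
  have "((\<lambda>x. (x - a) powr (\<alpha> - 1)) has_integral
          ((c - a) powr \<alpha> / \<alpha> - (a - a) powr \<alpha> / \<alpha>)) {a..c}"
    by (rule has_integral_real_derivative_interior[where F = "\<lambda>x. (x - a) powr \<alpha> / \<alpha>"])
      (use assms in \<open>auto intro!: derivative_eq_intros continuous_on_divide continuous_on_minus
        continuous_on_powr_Icc\<close>)
  then show "(\<lambda>x. (x - a) powr (\<alpha> - 1)) integrable_on {a..c}"
    by blast
qed

lemma absolutely_integrable_continuous_mult:
  fixes g h :: "real \<Rightarrow> real"
  assumes "continuous_on {a..c} g" "h absolutely_integrable_on {a..c}"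
  shows "(\<lambda>x. g x * h x) absolutely_integrable_on {a..c}"
  using assms
  by (intro absolutely_integrable_bounded_measurable_product_real
        continuous_imp_measurable_on_sets_lebesgue compact_imp_bounded compact_continuous_image)
    auto

lemma absolutely_integrable_powr_kernel_mult:
  fixes g :: "real \<Rightarrow> real"
  assumes "a \<le> c" "\<alpha> > 0" "continuous_on {a..c} g"
  shows "(\<lambda>x. (c - x) powr (\<alpha> - 1) * g x) absolutely_integrable_on {a..c}"
    and "(\<lambda>x. (x - a) powr (\<alpha> - 1) * g x) absolutely_integrable_on {a..c}"
  using absolutely_integrable_continuous_mult[OF assms(3)
      nonnegative_absolutely_integrable_1[OF powr_kernel_integrable_on(1)[OF assms(1,2)]]]
    absolutely_integrable_continuous_mult[OF assms(3)
      nonnegative_absolutely_integrable_1[OF powr_kernel_integrable_on(2)[OF assms(1,2)]]]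
  by (simp_all add: mult.commute)

lemma absolutely_integrable_if_set_integrable_lborel:
  fixes f :: "real \<Rightarrow> real"
  assumes "set_integrable lborel S f"
  shows "f absolutely_integrable_on S"
  using assms unfolding set_integrable_def
  by (subst integrable_completion) (auto dest: borel_measurable_integrable)

lemma set_integrable_lborel_mult_continuous:
  fixes k g :: "real \<Rightarrow> real"
  assumes "(\<lambda>x. k x * g x) absolutely_integrable_on {a..c}"
    and "k \<in> borel_measurable borel" "continuous_on {a..c} g"
  shows "set_integrable lborel {a..c} (\<lambda>x. k x * g x)"
proof -
  have "(\<lambda>x. indicator {a..c} x *\<^sub>R g x) \<in> borel_measurable borel"
    using assms(3) by (intro borel_measurable_continuous_on_indicator) auto
  then have "(\<lambda>x. k x * (indicator {a..c} x *\<^sub>R g x)) \<in> borel_measurable borel"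
    using assms(2) by measurable
  then have "(\<lambda>x. indicator {a..c} x *\<^sub>R (k x * g x)) \<in> borel_measurable lborel"
    by (simp add: indicator_def mult_ac cong: if_cong)
  then show ?thesis
    using assms(1) unfolding set_integrable_def by (simp add: integrable_completion)
qed

lemma RL_left_eq_integral:
  fixes g :: "real \<Rightarrow> real"
  assumes "c \<le> x" "\<alpha> > 0" "continuous_on {c..x} g"
  shows "RL_left \<alpha> c g x = integral {c..x} (\<lambda>t. (x - t) powr (\<alpha> - 1) * g t) / Gamma \<alpha>"
proof -
  have "set_integrable lborel {c..x} (\<lambda>t. (x - t) powr (\<alpha> - 1) * g t)"
    using absolutely_integrable_powr_kernel_mult(1)[OF assms]
    by (rule set_integrable_lborel_mult_continuous) (use assms(3) in measurable)
  then show ?thesis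
    unfolding RL_left_def by (simp add: set_borel_integral_eq_integral(2))
qed

lemma RL_right_eq_integral:
  fixes g :: "real \<Rightarrow> real"
  assumes "x \<le> d" "\<alpha> > 0" "continuous_on {x..d} g"
  shows "RL_right \<alpha> d g x = integral {x..d} (\<lambda>t. (t - x) powr (\<alpha> - 1) * g t) / Gamma \<alpha>"
proof -
  have "set_integrable lborel {x..d} (\<lambda>t. (t - x) powr (\<alpha> - 1) * g t)"
    using absolutely_integrable_powr_kernel_mult(2)[OF assms]
    by (rule set_integrable_lborel_mult_continuous) (use assms(3) in measurable)
  then show ?thesis
    unfolding RL_right_def by (simp add: set_borel_integral_eq_integral(2))
qed

lemma has_integral_powr_mult_deriv_right:
  fixes f f' :: "real \<Rightarrow> real"
  assumes "a \<le> c" "\<alpha> > 0"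
    and deriv: "\<And>x. x \<in> {a..c} \<Longrightarrow> (f has_real_derivative f' x) (at x)"
    and "f' absolutely_integrable_on {a..c}"
  shows "((\<lambda>x. (c - x) powr \<alpha> * f' x) has_integral
           \<alpha> * integral {a..c} (\<lambda>x. (c - x) powr (\<alpha> - 1) * f x) - (c - a) powr \<alpha> * f a) {a..c}"
proof -
  have cont: "continuous_on {a..c} f"
    using deriv DERIV_isCont by (blast intro: continuous_at_imp_continuous_on)
  have "((\<lambda>x. (c - x) powr \<alpha> * f' x - \<alpha> * ((c - x) powr (\<alpha> - 1) * f x)) has_integral
          ((c - c) powr \<alpha> * f c - (c - a) powr \<alpha> * f a)) {a..c}"
    by (rule has_integral_real_derivative_interior[where F = "\<lambda>x. (c - x) powr \<alpha> * f x"])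
      (use assms cont in \<open>auto intro!: derivative_eq_intros continuous_on_mult continuous_on_powr_Icc
        simp: algebra_simps\<close>)
  moreover have "((\<lambda>x. \<alpha> * ((c - x) powr (\<alpha> - 1) * f x)) has_integral
          \<alpha> * integral {a..c} (\<lambda>x. (c - x) powr (\<alpha> - 1) * f x)) {a..c}"
    using absolutely_integrable_powr_kernel_mult(1)[OF assms(1,2) cont]
    by (intro has_integral_mult_right integrable_integral) (simp add: absolutely_integrable_on_def)
  ultimately show ?thesis
    by (auto dest: has_integral_add)
qed

lemma has_integral_powr_mult_deriv_left:
  fixes f f' :: "real \<Rightarrow> real"
  assumes "a \<le> c" "\<alpha> > 0"
    and deriv: "\<And>x. x \<in> {a..c} \<Longrightarrow> (f has_real_derivative f' x) (at x)"
    and "f' absolutely_integrable_on {a..c}"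
  shows "((\<lambda>x. (x - a) powr \<alpha> * f' x) has_integral
           (c - a) powr \<alpha> * f c - \<alpha> * integral {a..c} (\<lambda>x. (x - a) powr (\<alpha> - 1) * f x)) {a..c}"
proof -
  have cont: "continuous_on {a..c} f"
    using deriv DERIV_isCont by (blast intro: continuous_at_imp_continuous_on)
  have "((\<lambda>x. (x - a) powr \<alpha> * f' x + \<alpha> * ((x - a) powr (\<alpha> - 1) * f x)) has_integral
          ((c - a) powr \<alpha> * f c - (a - a) powr \<alpha> * f a)) {a..c}"
    by (rule has_integral_real_derivative_interior[where F = "\<lambda>x. (x - a) powr \<alpha> * f x"])
      (use assms cont in \<open>auto intro!: derivative_eq_intros continuous_on_mult continuous_on_powr_Icc
        simp: algebra_simps\<close>)
  moreover have "((\<lambda>x. \<alpha> * ((x - a) powr (\<alpha> - 1) * f x)) has_integral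
          \<alpha> * integral {a..c} (\<lambda>x. (x - a) powr (\<alpha> - 1) * f x)) {a..c}"
    using absolutely_integrable_powr_kernel_mult(2)[OF assms(1,2) cont]
    by (intro has_integral_mult_right integrable_integral) (simp add: absolutely_integrable_on_def)
  ultimately show ?thesis
    by (auto dest: has_integral_diff)
qed

lemma fractional_trapezoid_identity:
  fixes f f' :: "real \<Rightarrow> real"
  assumes "a < c" "\<alpha> > 0"
    and deriv: "\<And>x. x \<in> {a..c} \<Longrightarrow> (f has_real_derivative f' x) (at x)"
    and "f' absolutely_integrable_on {a..c}"
  shows "(f a + f c) / 2 - Gamma (\<alpha> + 1) / (2 * (c - a) powr \<alpha>)
           * (RL_left \<alpha> a f c + RL_right \<alpha> c f a)
         = integral {a..c} (\<lambda>x. ((x - a) powr \<alpha> - (c - x) powr \<alpha>) * f' x) / (2 * (c - a) powr \<alpha>)"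
proof -
  define I\<^sub>l where "I\<^sub>l = integral {a..c} (\<lambda>x. (c - x) powr (\<alpha> - 1) * f x)"
  define I\<^sub>r where "I\<^sub>r = integral {a..c} (\<lambda>x. (x - a) powr (\<alpha> - 1) * f x)"
  have cont: "continuous_on {a..c} f"
    using deriv DERIV_isCont by (blast intro: continuous_at_imp_continuous_on)
  have RL: "RL_left \<alpha> a f c = I\<^sub>l / Gamma \<alpha>" "RL_right \<alpha> c f a = I\<^sub>r / Gamma \<alpha>"
    unfolding I\<^sub>l_def I\<^sub>r_def using assms(1,2) cont
    by (simp_all add: RL_left_eq_integral RL_right_eq_integral)
  have "((\<lambda>x. ((x - a) powr \<alpha> - (c - x) powr \<alpha>) * f' x) has_integral
          ((c - a) powr \<alpha> * f c - \<alpha> * I\<^sub>r) - (\<alpha> * I\<^sub>l - (c - a) powr \<alpha> * f a)) {a..c}"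
    unfolding I\<^sub>l_def I\<^sub>r_def left_diff_distrib
    using assms(1,2,4) deriv
    by (intro has_integral_diff has_integral_powr_mult_deriv_left has_integral_powr_mult_deriv_right)
      auto
  then have kernel: "integral {a..c} (\<lambda>x. ((x - a) powr \<alpha> - (c - x) powr \<alpha>) * f' x)
      = (c - a) powr \<alpha> * (f a + f c) - \<alpha> * (I\<^sub>l + I\<^sub>r)"
    by (simp add: integral_unique algebra_simps)
  have "Gamma (\<alpha> + 1) = \<alpha> * Gamma \<alpha>"
    using assms(2) by (intro Gamma_plus1) (auto simp: nonpos_Ints_def)
  moreover have "Gamma \<alpha> > 0" "(c - a) powr \<alpha> > 0"
    using assms(1,2) by auto
  ultimately show ?thesis
    unfolding RL kernel by (simp add: field_simps)
qed

lemma powr_kernel_mult_linear_antiderivative: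
  fixes a c x \<alpha> A B :: real
  assumes "a < x" "x < c" "\<alpha> > -1"
  shows "((\<lambda>x. (A - B) * (c - x) powr (\<alpha> + 2) / (\<alpha> + 2) - (A - B) * (x - a) powr (\<alpha> + 2) / (\<alpha> + 2)
             + B * (c - a) * (c - x) powr (\<alpha> + 1) / (\<alpha> + 1)
             + A * (c - a) * (x - a) powr (\<alpha> + 1) / (\<alpha> + 1))
          has_real_derivative ((x - a) powr \<alpha> - (c - x) powr \<alpha>) * ((c - x) * A + (x - a) * B)) (at x)"
proof -
  have "(c - x) powr (1 + \<alpha>) = (c - x) powr \<alpha> * (c - x)" "(x - a) powr (1 + \<alpha>) = (x - a) powr \<alpha> * (x - a)"
    using assms by (simp_all add: powr_add)
  with assms show ?thesis
    by (auto intro!: derivative_eq_intros) (simp add: algebra_simps)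
qed

lemma has_integral_abs_mult_sign_change:
  fixes G k w :: "real \<Rightarrow> real"
  assumes "a \<le> m" "m \<le> c" "continuous_on {a..c} G"
    and deriv: "\<And>x. x \<in> {a<..<c} \<Longrightarrow> (G has_real_derivative k x * w x) (at x)"
    and "\<And>x. x \<in> {a..m} \<Longrightarrow> k x \<le> 0" "\<And>x. x \<in> {m..c} \<Longrightarrow> k x \<ge> 0"
  shows "((\<lambda>x. \<bar>k x\<bar> * w x) has_integral (G a + G c - 2 * G m)) {a..c}"
proof -
  have "((\<lambda>x. k x * w x) has_integral (G m - G a)) {a..m}"
    using assms(1,2) deriv
    by (intro has_integral_real_derivative_interior continuous_on_subset[OF assms(3)]) auto
  from has_integral_neg[OF this] have "((\<lambda>x. - (k x * w x)) has_integral (G a - G m)) {a..m}"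
    by simp
  then have left: "((\<lambda>x. \<bar>k x\<bar> * w x) has_integral (G a - G m)) {a..m}"
    by (rule has_integral_eq[rotated]) (use assms(5) in auto)
  have "((\<lambda>x. k x * w x) has_integral (G c - G m)) {m..c}"
    using assms(1,2) deriv
    by (intro has_integral_real_derivative_interior continuous_on_subset[OF assms(3)]) auto
  then have right: "((\<lambda>x. \<bar>k x\<bar> * w x) has_integral (G c - G m)) {m..c}"
    by (rule has_integral_eq[rotated]) (use assms(6) in auto)
  show ?thesis
    using has_integral_combine[OF assms(1,2) left right] by simp
qed

lemma has_integral_abs_powr_kernel_mult_linear:
  fixes a c \<alpha> A B :: real
  assumes "a < c" "\<alpha> > 0"
  shows "((\<lambda>x. \<bar>(x - a) powr \<alpha> - (c - x) powr \<alpha>\<bar> * ((c - x) * A + (x - a) * B)) has_integral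
           (A + B) * (c - a) powr (\<alpha> + 2) * (1 - 1 / 2 powr \<alpha>) / (\<alpha> + 1)) {a..c}"
proof -
  define h where "h = c - a"
  define m where "m = (a + c) / 2"
  define P where "P x = (A - B) * (c - x) powr (\<alpha> + 2) / (\<alpha> + 2) - (A - B) * (x - a) powr (\<alpha> + 2) / (\<alpha> + 2)
      + B * h * (c - x) powr (\<alpha> + 1) / (\<alpha> + 1) + A * h * (x - a) powr (\<alpha> + 1) / (\<alpha> + 1)" for x
  have hpos: "h > 0" and am: "a \<le> m" "m \<le> c" and mid: "c - m = h / 2" "m - a = h / 2"
    using assms(1) unfolding h_def m_def by (auto simp: field_simps)
  have "continuous_on {a..c} P"
    unfolding P_def using assms(2)
    by (intro continuous_on_add continuous_on_diff continuous_on_mult continuous_on_divide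
        continuous_on_const continuous_on_powr_Icc) auto
  moreover have "(P has_real_derivative
      ((x - a) powr \<alpha> - (c - x) powr \<alpha>) * ((c - x) * A + (x - a) * B)) (at x)" if "x \<in> {a<..<c}" for x
    unfolding P_def h_def using that assms(2) by (intro powr_kernel_mult_linear_antiderivative) auto
  moreover have "(x - a) powr \<alpha> - (c - x) powr \<alpha> \<le> 0" if "x \<in> {a..m}" for x
    using that assms(2) unfolding m_def by (auto intro!: powr_mono2)
  moreover have "(x - a) powr \<alpha> - (c - x) powr \<alpha> \<ge> 0" if "x \<in> {m..c}" for x
    using that assms(2) unfolding m_def by (auto intro!: powr_mono2)
  ultimately have integral: "((\<lambda>x. \<bar>(x - a) powr \<alpha> - (c - x) powr \<alpha>\<bar> * ((c - x) * A + (x - a) * B))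
      has_integral (P a + P c - 2 * P m)) {a..c}"
    using am by (intro has_integral_abs_mult_sign_change) auto
  define S where "S = (A + B) * h powr (\<alpha> + 2) / (\<alpha> + 1)"
  have h_powr: "h * h powr (\<alpha> + 1) = h powr (\<alpha> + 2)"
    using hpos powr_add[of h "\<alpha> + 1" 1] by (simp add: add.assoc)
  have half_powr: "h * (h / 2) powr (\<alpha> + 1) = h powr (\<alpha> + 2) / (2 * 2 powr \<alpha>)"
    using hpos by (simp add: powr_divide powr_add power2_eq_square mult_ac)
  have "P a = (A - B) * h powr (\<alpha> + 2) / (\<alpha> + 2) + B * h powr (\<alpha> + 2) / (\<alpha> + 1)"
    using assms(2) by (simp add: P_def h_def[symmetric] h_powr[symmetric] field_simps)
  moreover have "P c = - ((A - B) * h powr (\<alpha> + 2) / (\<alpha> + 2)) + A * h powr (\<alpha> + 2) / (\<alpha> + 1)"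
    using assms(2) by (simp add: P_def h_def[symmetric] h_powr[symmetric] field_simps)
  ultimately have ends: "P a + P c = S"
    unfolding S_def by (simp add: add_divide_distrib distrib_right)
  have "P m = (A + B) * (h * (h / 2) powr (\<alpha> + 1)) / (\<alpha> + 1)"
    by (simp add: P_def mid add_divide_distrib algebra_simps)
  then have middle: "2 * P m = S / 2 powr \<alpha>"
    unfolding S_def half_powr by simp
  have "P a + P c - 2 * P m = S * (1 - 1 / 2 powr \<alpha>)"
    using ends middle by (simp add: right_diff_distrib)
  then show ?thesis
    using integral unfolding S_def h_def by simp
qed

lemma abs_integral_powr_kernel_mult_le:
  fixes f' :: "real \<Rightarrow> real"
  assumes "a < c" "\<alpha> > 0"
    and "f' absolutely_integrable_on {a..c}"
    and bound: "\<And>x. x \<in> {a..c} \<Longrightarrow> (c - a) * \<bar>f' x\<bar> \<le> (c - x) * A + (x - a) * B"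
  shows "\<bar>integral {a..c} (\<lambda>x. ((x - a) powr \<alpha> - (c - x) powr \<alpha>) * f' x)\<bar>
         \<le> (A + B) * (c - a) powr (\<alpha> + 1) * (1 - 1 / 2 powr \<alpha>) / (\<alpha> + 1)"
proof -
  define K where "K x = (x - a) powr \<alpha> - (c - x) powr \<alpha>" for x
  define g where "g x = \<bar>K x\<bar> * ((c - x) * A + (x - a) * B) / (c - a)" for x
  have "continuous_on {a..c} K"
    unfolding K_def using assms(2) by (intro continuous_on_diff continuous_on_powr_Icc)
  then have Kf'_int: "(\<lambda>x. K x * f' x) integrable_on {a..c}"
    using assms(3) absolutely_integrable_continuous_mult absolutely_integrable_on_def by blast
  have "(c - a) powr (\<alpha> + 2) = (c - a) * (c - a) powr (\<alpha> + 1)"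
    using assms(1) powr_add[of "c - a" "\<alpha> + 1" 1] by (simp add: add.assoc)
  then have cancel: "(A + B) * (c - a) powr (\<alpha> + 2) * (1 - 1 / 2 powr \<alpha>) / (\<alpha> + 1) / (c - a)
      = (A + B) * (c - a) powr (\<alpha> + 1) * (1 - 1 / 2 powr \<alpha>) / (\<alpha> + 1)"
    using assms(1) by simp
  have "(g has_integral
      (A + B) * (c - a) powr (\<alpha> + 2) * (1 - 1 / 2 powr \<alpha>) / (\<alpha> + 1) / (c - a)) {a..c}"
    unfolding g_def K_def
    by (rule has_integral_divide[OF has_integral_abs_powr_kernel_mult_linear[OF assms(1,2)]])
  then have g_int: "(g has_integral (A + B) * (c - a) powr (\<alpha> + 1) * (1 - 1 / 2 powr \<alpha>) / (\<alpha> + 1))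
      {a..c}"
    unfolding cancel .
  have g_bound: "norm (K x * f' x) \<le> g x" if "x \<in> {a..c}" for x
  proof -
    have "\<bar>K x\<bar> * ((c - a) * \<bar>f' x\<bar>) \<le> \<bar>K x\<bar> * ((c - x) * A + (x - a) * B)"
      using bound[OF that] by (rule mult_left_mono) simp
    then show ?thesis
      unfolding g_def using assms(1) by (simp add: abs_mult pos_le_divide_eq mult_ac)
  qed
  have "norm (integral {a..c} (\<lambda>x. K x * f' x)) \<le> integral {a..c} g"
    using Kf'_int has_integral_integrable[OF g_int] g_bound by (rule integral_norm_bound_integral)
  then show ?thesis
    using integral_unique[OF g_int] unfolding K_def by simp
qed

lemma fractional_trapezoid_inequality:
  fixes f f' :: "real \<Rightarrow> real"
  assumes "a < c" "\<alpha> > 0"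
    and "\<And>x. x \<in> {a..c} \<Longrightarrow> (f has_real_derivative f' x) (at x)"
    and "f' absolutely_integrable_on {a..c}"
    and "\<And>x. x \<in> {a..c} \<Longrightarrow> (c - a) * \<bar>f' x\<bar> \<le> (c - x) * A + (x - a) * B"
  shows "\<bar>(f a + f c) / 2 - Gamma (\<alpha> + 1) / (2 * (c - a) powr \<alpha>)
           * (RL_left \<alpha> a f c + RL_right \<alpha> c f a)\<bar>
         \<le> (c - a) / (2 * (\<alpha> + 1)) * (1 - 1 / 2 powr \<alpha>) * (A + B)"
proof -
  have pos: "(c - a) powr \<alpha> > 0"
    using assms(1) by simp
  have "\<bar>(f a + f c) / 2 - Gamma (\<alpha> + 1) / (2 * (c - a) powr \<alpha>)
           * (RL_left \<alpha> a f c + RL_right \<alpha> c f a)\<bar>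
      = \<bar>integral {a..c} (\<lambda>x. ((x - a) powr \<alpha> - (c - x) powr \<alpha>) * f' x)\<bar> / (2 * (c - a) powr \<alpha>)"
    using fractional_trapezoid_identity[OF assms(1-4)] pos by simp
  also have "\<dots> \<le> (A + B) * (c - a) powr (\<alpha> + 1) * (1 - 1 / 2 powr \<alpha>) / (\<alpha> + 1)
      / (2 * (c - a) powr \<alpha>)"
    using pos by (intro divide_right_mono abs_integral_powr_kernel_mult_le) (use assms in auto)
  also have "\<dots> = (c - a) / (2 * (\<alpha> + 1)) * (1 - 1 / 2 powr \<alpha>) * (A + B)"
    using pos assms(1) by (simp add: powr_add mult_ac)
  finally show ?thesis .
qed

lemma invex_set_Icc_subset:
  assumes "invex_set A \<eta>" "a \<in> A" "b \<in> A" "\<eta> b a > 0"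
  shows "{a..a + \<eta> b a} \<subseteq> A"
proof
  fix x assume x: "x \<in> {a..a + \<eta> b a}"
  have "(x - a) / \<eta> b a \<in> {0..1}" "x = a + (x - a) / \<eta> b a * \<eta> b a"
    using x assms(4) by auto
  then show "x \<in> A"
    using assms(1-3) unfolding invex_set_def by metis
qed

lemma preinvex_on_Icc_le:
  assumes "preinvex_on A \<eta> g" "a \<in> A" "b \<in> A" "\<eta> b a > 0" "x \<in> {a..a + \<eta> b a}"
  shows "\<eta> b a * g x \<le> (a + \<eta> b a - x) * g a + (x - a) * g b"
proof -
  define t where "t = (x - a) / \<eta> b a"
  have "t \<in> {0..1}" "x = a + t * \<eta> b a"
    using assms(4,5) unfolding t_def by auto
  then have "g x \<le> (1 - t) * g a + t * g b"
    using assms(1-3) unfolding preinvex_on_def by metis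
  then have "\<eta> b a * g x \<le> \<eta> b a * ((1 - t) * g a + t * g b)"
    using assms(4) by simp
  also have "\<dots> = (a + \<eta> b a - x) * g a + (x - a) * g b"
    using assms(4) unfolding t_def by (simp add: field_simps)
  finally show ?thesis .
qed

theorem theorem2p3:
  fixes A :: "real set" and \<eta> :: "real \<Rightarrow> real \<Rightarrow> real"
    and f f' :: "real \<Rightarrow> real" and a b \<alpha> :: real
  assumes "open A" and "invex_set A \<eta>"
    and "a \<in> A" and "b \<in> A" and "a < a + \<eta> b a"
    and "\<And>x. x \<in> A \<Longrightarrow> (f has_real_derivative f' x) (at x)"
    and "set_integrable lborel {a..a + \<eta> b a} f'"
    and "preinvex_on A \<eta> (\<lambda>x. \<bar>f' x\<bar>)"
    and "\<alpha> > 0"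
  shows "\<bar>(f a + f (a + \<eta> b a)) / 2
           - Gamma (\<alpha> + 1) / (2 * (\<eta> b a) powr \<alpha>)
             * (RL_left \<alpha> a f (a + \<eta> b a) + RL_right \<alpha> (a + \<eta> b a) f a)\<bar>
         \<le> \<eta> b a / (2 * (\<alpha> + 1)) * (1 - 1 / 2 powr \<alpha>) * (\<bar>f' a\<bar> + \<bar>f' b\<bar>)"
proof -
  let ?c = "a + \<eta> b a"
  have \<eta>_pos: "\<eta> b a > 0"
    using assms(5) by simp
  have "{a..?c} \<subseteq> A"
    using invex_set_Icc_subset[OF assms(2-4) \<eta>_pos] .
  then have "\<And>x. x \<in> {a..?c} \<Longrightarrow> (f has_real_derivative f' x) (at x)"
    using assms(6) by blast
  moreover have "f' absolutely_integrable_on {a..?c}"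
    using assms(7) by (rule absolutely_integrable_if_set_integrable_lborel)
  moreover have "\<And>x. x \<in> {a..?c} \<Longrightarrow> (?c - a) * \<bar>f' x\<bar> \<le> (?c - x) * \<bar>f' a\<bar> + (x - a) * \<bar>f' b\<bar>"
    using preinvex_on_Icc_le[OF assms(8,3,4) \<eta>_pos] by simp
  ultimately have "\<bar>(f a + f ?c) / 2 - Gamma (\<alpha> + 1) / (2 * (?c - a) powr \<alpha>)
        * (RL_left \<alpha> a f ?c + RL_right \<alpha> ?c f a)\<bar>
      \<le> (?c - a) / (2 * (\<alpha> + 1)) * (1 - 1 / 2 powr \<alpha>) * (\<bar>f' a\<bar> + \<bar>f' b\<bar>)"
    by (intro fractional_trapezoid_inequality assms(5,9))
  then show ?thesis
    by simp
qed

end
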